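(* Let $\{x_k\}$, $\{d_k\}$ be generated by Algorithm 1 or Algorithm 2 (described in the context) under the Standing Assumption and Matrix Assumption of the context, and suppose the algorithm does not terminate finitely. Write $d_k=u_k+v_k$ with $u_k\in\mathrm{Null}(J_k)$, $v_k\in\mathrm{Range}(J_k^T)$. Then the sequence $\{u_k\}$ is bounded.
   Context: Notation: $g_k=\nabla f(x_k)$, $c_k=c(x_k)$, $J_k=\nabla c(x_k)^T$; $\phi(x,\tau)=\tau f(x)+\|c(x)\|_1$; $\Delta q(x,\tau,g,H,d)=-\tau(g^Td+\frac12\max\{d^THd,0\})+\|c(x)\|_1$. Matrix Assumption: symmetric $H_k$ with $\|H_k\|_2\le\kappa_H$ and $u^TH_ku\ge\zeta\|u\|_2^2$ whenever $J_ku=0$. Common iteration: $(d_k,y_k)$ solves $H_kd_k+J_k^Ty_k=-g_k$, $J_kd_k=-c_k$; stop if $g_k+J_k^Ty_k=0$ and $c_k=0$. $\tau_k^{trial}=\infty$ if $g_k^Td_k+\max\{d_k^TH_kd_k,0\}\le0$, else $\frac{(1-\sigma)\|c_k\|_1}{g_k^Td_k+\max\{d_k^TH_kd_k,0\}}$; $\tau_k=\tau_{k-1}$ if $\tau_{k-1}\le\tau_k^{trial}$, else $(1-\epsilon)\tau_k^{trial}$; $x_{k+1}=x_k+\alpha_kd_k$. (SD) for trial $\alpha$: $\phi(x_k+\alpha d_k,\tau_k)\le\phi(x_k,\tau_k)-\eta\alpha\Delta q(x_k,\tau_k,g_k,H_k,d_k)$. Algorithm 1 (inputs $\tau_{-1}>0$,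 $\epsilon,\sigma,\eta\in(0,1)$, $\rho>1$, $L_{-1}>0$, $\gamma_{-1,i}>0$): choose $L_{k,0}\in(0,L_{k-1}]$, $\gamma_{k,i,0}\in(0,\gamma_{k-1,i}]$; for $j=0,1,\dots$ with $\Lambda_{k,j}=\tau_kL_{k,j}+\sum_i\gamma_{k,i,j}$: $\widehat\alpha_{k,j}=\frac{2(1-\eta)\Delta q(x_k,\tau_k,g_k,H_k,d_k)}{\Lambda_{k,j}\|d_k\|_2^2}$, $\widetilde\alpha_{k,j}=\widehat\alpha_{k,j}-\frac{4\|c_k\|_1}{\Lambda_{k,j}\|d_k\|_2^2}$; $\alpha_{k,j}=\widehat\alpha_{k,j}$ if $\widehat\alpha_{k,j}<1$, $1$ if $\widetilde\alpha_{k,j}\le1\le\widehat\alpha_{k,j}$, $\widetilde\alpha_{k,j}$ if $\widetilde\alpha_{k,j}>1$; accept ($\alpha_k=\alpha_{k,j}$, $L_k=L_{k,j}$, $\gamma_{k,i}=\gamma_{k,i,j}$) if (SD) holds or if both $f(x_k+\alpha_{k,j}d_k)\le f(x_k)+\alpha_{k,j}g_k^Td_k+\frac12L_{k,j}\alpha_{k,j}^2\|d_k\|_2^2$ (LF) and $|c_i(x_k+\alpha_{k,j}d_k)|\le|c_i(x_k)+\alpha_{k,j}\nabla c_i(x_k)^Td_k|+\frac12\gamma_{k,i,j}\alpha_{k,j}^2\|d_k\|_2^2$ (LC$_i$) for all $i$; otherwise multiply $L_{k,j}$ by $\rho$ if (LF) fails and $\gamma_{k,i,j}$ by $\rho$ if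 (LC$_i$) fails. Algorithm 2 (inputs $\tau_{-1}>0$, $\epsilon,\sigma,\eta,\nu\in(0,1)$, $\alpha>0$): $\alpha_k=\nu^j\alpha$ for the smallest $j\ge0$ such that (SD) holds. Standing Assumption: an open convex set $\mathcal X$ contains all iterates and trial points $x_k+\alpha_{k,j}d_k$; $f$ is $C^1$, bounded below on $\mathcal X$, $\nabla f$ bounded and $L$-Lipschitz on $\mathcal X$; $c$, $\nabla c^T$ bounded on $\mathcal X$; $\nabla c_i$ is $\gamma_i$-Lipschitz on $\mathcal X$; singular values of $\nabla c(x)^T$ bounded away from zero uniformly over $\mathcal X$. *)

theory Defs
  imports "HOL-Analysis.Analysis"
begin

text \<open>Vectors in R^n are real^'n, constraint values in R^m are real^'m,
  the constraint Jacobian J(x) = (grad c(x))^T is an m x n matrix real^'n^'m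
  whose i-th row (Jc x $ i) is grad c_i(x).\<close>

definition l1norm :: "real^'m \<Rightarrow> real" where
  "l1norm v = (\<Sum>i\<in>UNIV. \<bar>v $ i\<bar>)"

definition merit :: "(real^'n \<Rightarrow> real) \<Rightarrow> (real^'n \<Rightarrow> real^'m) \<Rightarrow> real^'n \<Rightarrow> real \<Rightarrow> real" where
  "merit f c x tau = tau * f x + l1norm (c x)"

definition dq :: "(real^'n \<Rightarrow> real^'m) \<Rightarrow> real^'n \<Rightarrow> real \<Rightarrow> real^'n \<Rightarrow> real^'n^'n \<Rightarrow> real^'n \<Rightarrow> real" where
  "dq c x tau g H d = - tau * (g \<bullet> d + (1/2) * max (d \<bullet> (H *v d)) 0) + l1norm (c x)"

definition SD :: "(real^'n \<Rightarrow> real) \<Rightarrow> (real^'n \<Rightarrow> real^'m) \<Rightarrow> real \<Rightarrow> real^'n \<Rightarrow> real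
    \<Rightarrow> real^'n \<Rightarrow> real^'n^'n \<Rightarrow> real^'n \<Rightarrow> real \<Rightarrow> bool" where
  "SD f c eta x tau g H d a \<longleftrightarrow>
     merit f c (x + a *\<^sub>R d) tau \<le> merit f c x tau - eta * a * dq c x tau g H d"

definition singular_values :: "real^'m^'n \<Rightarrow> real set" where
  "singular_values A = {sqrt l | l. \<exists>v. v \<noteq> 0 \<and> (transpose A ** A) *v v = l *\<^sub>R v}"

definition tau_trial :: "real \<Rightarrow> real^'n \<Rightarrow> real^'m \<Rightarrow> real^'n^'n \<Rightarrow> real^'n \<Rightarrow> ereal" where
  "tau_trial sig g cx H d =
     (if g \<bullet> d + max (d \<bullet> (H *v d)) 0 \<le> 0 then \<infinity>
      else ereal ((1 - sig) * l1norm cx / (g \<bullet> d + max (d \<bullet> (H *v d)) 0)))"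

definition tau_update :: "real \<Rightarrow> real \<Rightarrow> ereal \<Rightarrow> real" where
  "tau_update eps tau_prev trial =
     (if ereal tau_prev \<le> trial then tau_prev else (1 - eps) * real_of_ereal trial)"

text \<open>tau_{k-1}: the value tau_{-1} for k = 0, otherwise tau (k-1).\<close>
definition prev_val :: "'a \<Rightarrow> (nat \<Rightarrow> 'a) \<Rightarrow> nat \<Rightarrow> 'a" where
  "prev_val a0 s k = (if k = 0 then a0 else s (k - 1))"

definition stop_test :: "real^'n \<Rightarrow> real^'m \<Rightarrow> real^'n^'m \<Rightarrow> real^'m \<Rightarrow> bool" where
  "stop_test g cx J y \<longleftrightarrow> g + transpose J *v y = 0 \<and> cx = 0"

definition common_iteration ::
  "(real^'n \<Rightarrow> real^'n) \<Rightarrow> (real^'n \<Rightarrow> real^'m) \<Rightarrow> (real^'n \<Rightarrow> real^'n^'m)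
   \<Rightarrow> real \<Rightarrow> real \<Rightarrow> real
   \<Rightarrow> (nat \<Rightarrow> real^'n) \<Rightarrow> (nat \<Rightarrow> real^'n) \<Rightarrow> (nat \<Rightarrow> real^'m) \<Rightarrow> (nat \<Rightarrow> real^'n^'n)
   \<Rightarrow> (nat \<Rightarrow> real) \<Rightarrow> (nat \<Rightarrow> real) \<Rightarrow> bool" where
  "common_iteration gf c Jc tau0 eps sig x d y H tau alpha \<longleftrightarrow>
     (\<forall>k. H k *v d k + transpose (Jc (x k)) *v y k = - gf (x k)
        \<and> Jc (x k) *v d k = - c (x k)
        \<and> tau k = tau_update eps (prev_val tau0 tau k)
                    (tau_trial sig (gf (x k)) (c (x k)) (H k) (d k))
        \<and> x (Suc k) = x k + alpha k *\<^sub>R d k)"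

definition alpha_A1 :: "real \<Rightarrow> real \<Rightarrow> real \<Rightarrow> real \<Rightarrow> real \<Rightarrow> real" where
  "alpha_A1 eta Lam dqk dn2 cn =
     (let ahat = 2 * (1 - eta) * dqk / (Lam * dn2);
          atil = ahat - 4 * cn / (Lam * dn2)
      in if ahat < 1 then ahat else if atil \<le> 1 then 1 else atil)"

definition LF_cond :: "(real^'n \<Rightarrow> real) \<Rightarrow> real^'n \<Rightarrow> real^'n \<Rightarrow> real^'n \<Rightarrow> real \<Rightarrow> real \<Rightarrow> bool" where
  "LF_cond f x g d a L \<longleftrightarrow>
     f (x + a *\<^sub>R d) \<le> f x + a * (g \<bullet> d) + (1/2) * L * a\<^sup>2 * (norm d)\<^sup>2"

definition LC_cond :: "(real^'n \<Rightarrow> real^'m) \<Rightarrow> (real^'n \<Rightarrow> real^'n^'m) \<Rightarrow> 'm \<Rightarrow> real^'n \<Rightarrow> real^'n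
    \<Rightarrow> real \<Rightarrow> real \<Rightarrow> bool" where
  "LC_cond c Jc i x d a gam \<longleftrightarrow>
     \<bar>c (x + a *\<^sub>R d) $ i\<bar> \<le> \<bar>c x $ i + a * ((Jc x $ i) \<bullet> d)\<bar> + (1/2) * gam * a\<^sup>2 * (norm d)\<^sup>2"

text \<open>LL k j = L_{k,j}, GG k j i = gamma_{k,i,j}, jacc k = index j of the accepted trial in
  iteration k (so L_k = LL k (jacc k), gamma_{k,i} = GG k (jacc k) i).\<close>
definition A1_trial :: "(real^'n \<Rightarrow> real) \<Rightarrow> (real^'n \<Rightarrow> real^'n) \<Rightarrow> (real^'n \<Rightarrow> real^'m) \<Rightarrow> real
   \<Rightarrow> (nat \<Rightarrow> real^'n) \<Rightarrow> (nat \<Rightarrow> real^'n) \<Rightarrow> (nat \<Rightarrow> real^'n^'n) \<Rightarrow> (nat \<Rightarrow> real)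
   \<Rightarrow> (nat \<Rightarrow> nat \<Rightarrow> real) \<Rightarrow> (nat \<Rightarrow> nat \<Rightarrow> 'm \<Rightarrow> real) \<Rightarrow> nat \<Rightarrow> nat \<Rightarrow> real" where
  "A1_trial f gf c eta x d H tau LL GG k j =
     alpha_A1 eta (tau k * LL k j + (\<Sum>i\<in>UNIV. GG k j i))
       (dq c (x k) (tau k) (gf (x k)) (H k) (d k)) ((norm (d k))\<^sup>2) (l1norm (c (x k)))"

definition algorithm1 ::
  "(real^'n \<Rightarrow> real) \<Rightarrow> (real^'n \<Rightarrow> real^'n) \<Rightarrow> (real^'n \<Rightarrow> real^'m) \<Rightarrow> (real^'n \<Rightarrow> real^'n^'m)
   \<Rightarrow> (real^'n) set
   \<Rightarrow> real \<Rightarrow> real \<Rightarrow> real \<Rightarrow> real \<Rightarrow> real \<Rightarrow> real \<Rightarrow> ('m \<Rightarrow> real)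
   \<Rightarrow> (nat \<Rightarrow> real^'n) \<Rightarrow> (nat \<Rightarrow> real^'n) \<Rightarrow> (nat \<Rightarrow> real^'m) \<Rightarrow> (nat \<Rightarrow> real^'n^'n)
   \<Rightarrow> (nat \<Rightarrow> real) \<Rightarrow> (nat \<Rightarrow> real)
   \<Rightarrow> (nat \<Rightarrow> nat \<Rightarrow> real) \<Rightarrow> (nat \<Rightarrow> nat \<Rightarrow> 'm \<Rightarrow> real) \<Rightarrow> (nat \<Rightarrow> nat) \<Rightarrow> bool" where
  "algorithm1 f gf c Jc X tau0 eps sig eta rho L0 gam0 x d y H tau alpha LL GG jacc \<longleftrightarrow>
     0 < tau0 \<and> 0 < eps \<and> eps < 1 \<and> 0 < sig \<and> sig < 1 \<and> 0 < eta \<and> eta < 1 \<and> 1 < rho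
     \<and> 0 < L0 \<and> (\<forall>i. 0 < gam0 i)
     \<and> common_iteration gf c Jc tau0 eps sig x d y H tau alpha
     \<and> (\<forall>k. 0 < LL k 0 \<and> LL k 0 \<le> prev_val L0 (\<lambda>k'. LL k' (jacc k')) k
          \<and> (\<forall>i. 0 < GG k 0 i \<and> GG k 0 i \<le> prev_val gam0 (\<lambda>k'. GG k' (jacc k')) k i)
          \<and> (\<forall>j. let a = A1_trial f gf c eta x d H tau LL GG k j;
                     xk = x k; gk = gf (x k);
                     acc = (SD f c eta xk (tau k) gk (H k) (d k) a
                            \<or> (LF_cond f xk gk (d k) a (LL k j)
                               \<and> (\<forall>i. LC_cond c Jc i xk (d k) a (GG k j i))))
                 in (j < jacc k \<longrightarrow>
                        \<not> acc
                        \<and> LL k (Suc j) = (if LF_cond f xk gk (d k) a (LL k j)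
                                           then LL k j else rho * LL k j)
                        \<and> (\<forall>i. GG k (Suc j) i = (if LC_cond c Jc i xk (d k) a (GG k j i)
                                                 then GG k j i else rho * GG k j i)))
                  \<and> (j = jacc k \<longrightarrow> acc \<and> alpha k = a)
                  \<and> (j \<le> jacc k \<longrightarrow> xk + a *\<^sub>R d k \<in> X)))"

definition algorithm2 ::
  "(real^'n \<Rightarrow> real) \<Rightarrow> (real^'n \<Rightarrow> real^'n) \<Rightarrow> (real^'n \<Rightarrow> real^'m) \<Rightarrow> (real^'n \<Rightarrow> real^'n^'m)
   \<Rightarrow> (real^'n) set
   \<Rightarrow> real \<Rightarrow> real \<Rightarrow> real \<Rightarrow> real \<Rightarrow> real \<Rightarrow> real
   \<Rightarrow> (nat \<Rightarrow> real^'n) \<Rightarrow> (nat \<Rightarrow> real^'n) \<Rightarrow> (nat \<Rightarrow> real^'m) \<Rightarrow> (nat \<Rightarrow> real^'n^'n)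
   \<Rightarrow> (nat \<Rightarrow> real) \<Rightarrow> (nat \<Rightarrow> real) \<Rightarrow> bool" where
  "algorithm2 f gf c Jc X tau0 eps sig eta nu abar x d y H tau alpha \<longleftrightarrow>
     0 < tau0 \<and> 0 < eps \<and> eps < 1 \<and> 0 < sig \<and> sig < 1 \<and> 0 < eta \<and> eta < 1
     \<and> 0 < nu \<and> nu < 1 \<and> 0 < abar
     \<and> common_iteration gf c Jc tau0 eps sig x d y H tau alpha
     \<and> (\<forall>k. \<exists>j. alpha k = nu ^ j * abar
          \<and> SD f c eta (x k) (tau k) (gf (x k)) (H k) (d k) (nu ^ j * abar)
          \<and> (\<forall>i<j. \<not> SD f c eta (x k) (tau k) (gf (x k)) (H k) (d k) (nu ^ i * abar))
          \<and> (\<forall>i\<le>j. x k + (nu ^ i * abar) *\<^sub>R d k \<in> X))"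

definition standing_assumption ::
  "(real^'n \<Rightarrow> real) \<Rightarrow> (real^'n \<Rightarrow> real^'n) \<Rightarrow> (real^'n \<Rightarrow> real^'m) \<Rightarrow> (real^'n \<Rightarrow> real^'n^'m)
   \<Rightarrow> (real^'n) set \<Rightarrow> (nat \<Rightarrow> real^'n) \<Rightarrow> bool" where
  "standing_assumption f gf c Jc X x \<longleftrightarrow>
     open X \<and> convex X \<and> (\<forall>k. x k \<in> X)
     \<and> (\<forall>z\<in>X. (f has_derivative (\<lambda>h. gf z \<bullet> h)) (at z)) \<and> continuous_on X gf
     \<and> (\<exists>B. \<forall>z\<in>X. B \<le> f z)
     \<and> bounded (gf ` X) \<and> (\<exists>L. lipschitz_on L X gf)
     \<and> (\<forall>z\<in>X. (c has_derivative (\<lambda>h. Jc z *v h)) (at z))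
     \<and> bounded (c ` X) \<and> bounded (Jc ` X)
     \<and> (\<forall>i. \<exists>gam. lipschitz_on gam X (\<lambda>z. Jc z $ i))
     \<and> (\<exists>s>0. \<forall>z\<in>X. \<forall>sv\<in>singular_values (transpose (Jc z)). s \<le> sv)"

definition matrix_assumption ::
  "(real^'n \<Rightarrow> real^'n^'m) \<Rightarrow> (nat \<Rightarrow> real^'n) \<Rightarrow> (nat \<Rightarrow> real^'n^'n) \<Rightarrow> bool" where
  "matrix_assumption Jc x H \<longleftrightarrow>
     (\<exists>kappa zeta. 0 < zeta \<and>
        (\<forall>k. transpose (H k) = H k
           \<and> onorm (\<lambda>v. H k *v v) \<le> kappa
           \<and> (\<forall>u. Jc (x k) *v u = 0 \<longrightarrow> zeta * (norm u)\<^sup>2 \<le> u \<bullet> (H k *v u))))"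

end

theory Submission imports Defs begin

text \<open>Write \<open>J = J\<^sub>k\<close>. The range-space component \<open>v = J\<^sup>T w\<close> satisfies \<open>J v = -c\<^sub>k\<close>,
  and since the singular values of \<open>J\<^sup>T\<close> are bounded below by some \<open>s > 0\<close> we get
  \<open>s \<parallel>v\<parallel> \<le> \<parallel>J v\<parallel> = \<parallel>c\<^sub>k\<parallel>\<close>, which is bounded. Taking the inner product of the first block row
  of the Newton system with \<open>u \<in> Null(J)\<close> eliminates the multiplier and gives
  \<open>u\<^sup>T H u = -u\<^sup>T g - u\<^sup>T H v\<close>; curvature \<open>\<zeta>\<close> on the null space then yields
  \<open>\<zeta> \<parallel>u\<parallel> \<le> \<parallel>g\<parallel> + \<kappa> \<parallel>v\<parallel>\<close>, uniformly in \<open>k\<close>.\<close>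

lemma inner_transpose_mult_vector:
  fixes A :: "real^'n^'m"
  shows "x \<bullet> (transpose A *v y) = (A *v x) \<bullet> y"
  by (metis dot_lmul_matrix inner_commute transpose_transpose vector_transpose_matrix)

lemma psd_quadratic_form_eq_0_imp_eq_0:
  fixes P :: "'a::real_inner \<Rightarrow> 'a"
  assumes lin: "linear P" and sym: "\<And>a b. a \<bullet> P b = P a \<bullet> b"
    and psd: "\<And>a. 0 \<le> a \<bullet> P a" and zero: "w \<bullet> P w = 0"
  shows "P w = 0"
proof (rule ccontr)
  assume "P w \<noteq> 0"
  define r where "r = P w"
  define R where "R = r \<bullet> r"
  define K where "K = r \<bullet> P r"
  \<comment> \<open>moving from \<open>w\<close> a small step \<open>t\<close> against \<open>P w\<close> would make the form negative\<close>
  define t where "t = R / (K + 1)"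
  have "R > 0" using \<open>P w \<noteq> 0\<close> by (simp add: R_def r_def)
  have "K \<ge> 0" using psd by (simp add: K_def)
  have "t > 0" using \<open>R > 0\<close> \<open>K \<ge> 0\<close> by (simp add: t_def)
  have "t * K < R"
    using \<open>R > 0\<close> \<open>K \<ge> 0\<close> by (simp add: t_def field_simps)
  have "(w - t *\<^sub>R r) \<bullet> P (w - t *\<^sub>R r) = w \<bullet> P w - t * (w \<bullet> P r) - t * (r \<bullet> P w) + t * t * K"
    by (simp add: linear_diff[OF lin] linear_scale[OF lin] inner_diff_left inner_diff_right K_def
        algebra_simps)
  also have "\<dots> = t * (t * K - 2 * R)"
    using zero sym[of w r] by (simp add: R_def r_def inner_commute algebra_simps)
  also have "\<dots> < 0"
    using \<open>t > 0\<close> \<open>t * K < R\<close> \<open>R > 0\<close> by (simp add: mult_pos_neg)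
  finally show False using psd[of "w - t *\<^sub>R r"] by simp
qed

text \<open>The minimum of the Rayleigh quotient is attained on the unit sphere, and a minimiser is
  an eigenvector: \<open>M - \<mu> I\<close> is positive semidefinite with a zero of its quadratic form there.\<close>

lemma symmetric_matrix_min_eigenvalue:
  fixes M :: "real^'n^'n"
  assumes sym: "transpose M = M"
  obtains \<mu> w0 where "w0 \<noteq> 0" "M *v w0 = \<mu> *\<^sub>R w0" "\<And>z. \<mu> * (norm z)\<^sup>2 \<le> z \<bullet> (M *v z)"
proof -
  have "\<exists>w0\<in>sphere (0::real^'n) 1. \<forall>z\<in>sphere 0 1. w0 \<bullet> (M *v w0) \<le> z \<bullet> (M *v z)"
    by (rule continuous_attains_inf) (auto simp: sphere_eq_empty intro!: continuous_intros)
  then obtain w0 where w0: "norm w0 = 1"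
    and min: "\<And>z. norm z = 1 \<Longrightarrow> w0 \<bullet> (M *v w0) \<le> z \<bullet> (M *v z)"
    by auto
  define \<mu> where "\<mu> = w0 \<bullet> (M *v w0)"
  have lower: "\<mu> * (norm z)\<^sup>2 \<le> z \<bullet> (M *v z)" for z
  proof (cases "z = 0")
    case False
    have "\<mu> \<le> (z /\<^sub>R norm z) \<bullet> (M *v (z /\<^sub>R norm z))"
      unfolding \<mu>_def using False by (intro min) simp
    also have "\<dots> = (z \<bullet> (M *v z)) / (norm z)\<^sup>2"
      by (simp add: matrix_vector_mult_scaleR power2_eq_square divide_inverse)
    finally show ?thesis using False by (simp add: field_simps)
  qed simp
  define P where "P = (\<lambda>z. M *v z - \<mu> *\<^sub>R z)"
  have "linear P" unfolding linear_iff P_def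
    by (simp add: matrix_vector_right_distrib matrix_vector_mult_scaleR algebra_simps)
  moreover have "a \<bullet> P b = P a \<bullet> b" for a b
    using inner_transpose_mult_vector[of a M b] sym
    by (simp add: P_def inner_diff_left inner_diff_right inner_commute)
  moreover have "0 \<le> a \<bullet> P a" for a
    using lower[of a] by (simp add: P_def inner_diff_right power2_norm_eq_inner)
  moreover have "w0 \<bullet> P w0 = 0"
    using w0 by (simp add: P_def inner_diff_right \<mu>_def power2_norm_eq_inner[symmetric])
  ultimately have "P w0 = 0" by (rule psd_quadratic_form_eq_0_imp_eq_0)
  then have "M *v w0 = \<mu> *\<^sub>R w0" by (simp add: P_def)
  moreover have "w0 \<noteq> 0" using w0 by auto
  ultimately show ?thesis using lower that by blast
qed

lemma quadratic_form_ge_eigenvalue_bound: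
  fixes M :: "real^'n^'n"
  assumes "transpose M = M" and "\<And>l v. v \<noteq> 0 \<Longrightarrow> M *v v = l *\<^sub>R v \<Longrightarrow> \<beta> \<le> l"
  shows "\<beta> * (norm w)\<^sup>2 \<le> w \<bullet> (M *v w)"
proof -
  obtain \<mu> w0 where "w0 \<noteq> 0" "M *v w0 = \<mu> *\<^sub>R w0" and lower: "\<And>z. \<mu> * (norm z)\<^sup>2 \<le> z \<bullet> (M *v z)"
    using symmetric_matrix_min_eigenvalue[OF assms(1)] by blast
  then have "\<beta> \<le> \<mu>" using assms(2) by blast
  then have "\<beta> * (norm w)\<^sup>2 \<le> \<mu> * (norm w)\<^sup>2" by (simp add: mult_right_mono)
  also have "\<dots> \<le> w \<bullet> (M *v w)" by (rule lower)
  finally show ?thesis .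
qed

lemma singular_value_bound_norm_transpose:
  fixes J :: "real^'n^'m"
  assumes "0 < s" and sv: "\<forall>\<sigma>\<in>singular_values (transpose J). s \<le> \<sigma>"
  shows "s * norm w \<le> norm (transpose J *v w)"
proof -
  define M where "M = J ** transpose J"
  have "transpose M = M" by (simp add: M_def matrix_transpose_mul)
  moreover have "s\<^sup>2 \<le> l" if "v \<noteq> 0" "M *v v = l *\<^sub>R v" for l v
  proof -
    have "sqrt l \<in> singular_values (transpose J)"
      unfolding singular_values_def using that by (auto simp: M_def)
    then have "s \<le> sqrt l" using sv by blast
    moreover have "0 \<le> l" using \<open>0 < s\<close> \<open>s \<le> sqrt l\<close> by (meson less_le_trans real_sqrt_gt_0_iff less_imp_le)
    ultimately show ?thesis using \<open>0 < s\<close> by (metis power_mono less_imp_le real_sqrt_pow2)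
  qed
  ultimately have "s\<^sup>2 * (norm w)\<^sup>2 \<le> w \<bullet> (M *v w)" by (rule quadratic_form_ge_eigenvalue_bound)
  also have "\<dots> = (norm (transpose J *v w))\<^sup>2"
    using inner_transpose_mult_vector[of w "transpose J" "transpose J *v w"]
    by (simp add: M_def matrix_vector_mul_assoc[symmetric] power2_norm_eq_inner)
  finally have "(s * norm w)\<^sup>2 \<le> (norm (transpose J *v w))\<^sup>2" by (simp add: power_mult_distrib)
  then show ?thesis by (rule power2_le_imp_le) simp
qed

lemma singular_value_bound_range_transpose:
  fixes J :: "real^'n^'m"
  assumes "0 < s" and sv: "\<forall>\<sigma>\<in>singular_values (transpose J). s \<le> \<sigma>"
    and v: "v = transpose J *v w"
  shows "s * norm v \<le> norm (J *v v)"
proof (cases "v = 0")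
  case False
  have "(norm v)\<^sup>2 = w \<bullet> (J *v v)"
    using inner_transpose_mult_vector[of v J w] v by (simp add: power2_norm_eq_inner inner_commute)
  also have "\<dots> \<le> norm w * norm (J *v v)" by (rule norm_cauchy_schwarz)
  finally have "s * (norm v)\<^sup>2 \<le> (s * norm w) * norm (J *v v)"
    using \<open>0 < s\<close> by (simp add: mult.assoc)
  also have "\<dots> \<le> norm v * norm (J *v v)"
    using singular_value_bound_norm_transpose[OF \<open>0 < s\<close> sv, of w] v by (simp add: mult_right_mono)
  finally show ?thesis using False by (simp add: power2_eq_square)
qed simp

lemma null_space_component_bound:
  fixes J :: "real^'n^'m" and H :: "real^'n^'n"
  assumes Ju: "J *v u = 0" and curv: "\<zeta> * (norm u)\<^sup>2 \<le> u \<bullet> (H *v u)"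
    and H: "onorm (\<lambda>z. H *v z) \<le> \<kappa>"
    and newton: "H *v (u + v) + transpose J *v y = - g"
  shows "\<zeta> * norm u \<le> norm g + \<kappa> * norm v"
proof (cases "u = 0")
  case True
  have "0 \<le> \<kappa>" using H onorm_pos_le[OF matrix_vector_mul_bounded_linear[of H]] by linarith
  then show ?thesis using True by simp
next
  case False
  have "norm (H *v v) \<le> \<kappa> * norm v"
    using onorm[OF matrix_vector_mul_bounded_linear[of H], of v] H
    by (meson mult_right_mono norm_ge_zero order_trans)
  have "u \<bullet> (transpose J *v y) = 0" using inner_transpose_mult_vector[of u J y] Ju by simp
  then have "u \<bullet> (H *v u) = - (u \<bullet> g) - u \<bullet> (H *v v)"
    using arg_cong[OF newton, of "\<lambda>z. u \<bullet> z"]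
    by (simp add: matrix_vector_right_distrib inner_add_right)
  also have "\<dots> \<le> norm u * norm g + norm u * norm (H *v v)"
    using Cauchy_Schwarz_ineq2[of u g] Cauchy_Schwarz_ineq2[of u "H *v v"] by linarith
  also have "\<dots> \<le> norm u * (norm g + \<kappa> * norm v)"
    using \<open>norm (H *v v) \<le> \<kappa> * norm v\<close> by (simp add: distrib_left mult_left_mono)
  finally have "norm u * (\<zeta> * norm u) \<le> norm u * (norm g + \<kappa> * norm v)"
    using curv by (simp add: power2_eq_square algebra_simps)
  then show ?thesis using False by simp
qed

theorem lemma2p15:
  fixes f :: "real^'n::finite \<Rightarrow> real" and gf :: "real^'n \<Rightarrow> real^'n"
    and c :: "real^'n \<Rightarrow> real^'m::finite" and Jc :: "real^'n \<Rightarrow> real^'n^'m"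
    and X :: "(real^'n) set"
    and x d :: "nat \<Rightarrow> real^'n" and y :: "nat \<Rightarrow> real^'m" and H :: "nat \<Rightarrow> real^'n^'n"
    and tau alpha :: "nat \<Rightarrow> real"
    and u v :: "nat \<Rightarrow> real^'n"
  assumes SA: "standing_assumption f gf c Jc X x"
    and MA: "matrix_assumption Jc x H"
    and ALG: "(\<exists>tau0 eps sig eta rho L0 gam0 LL GG jacc.
                 algorithm1 f gf c Jc X tau0 eps sig eta rho L0 gam0 x d y H tau alpha LL GG jacc)
            \<or> (\<exists>tau0 eps sig eta nu abar.
                 algorithm2 f gf c Jc X tau0 eps sig eta nu abar x d y H tau alpha)"
    and no_stop: "\<forall>k. \<not> stop_test (gf (x k)) (c (x k)) (Jc (x k)) (y k)"
    and decomp: "\<forall>k. d k = u k + v k \<and> Jc (x k) *v u k = 0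
                   \<and> v k \<in> range (\<lambda>w. transpose (Jc (x k)) *v w)"
  shows "bounded (range u)"
proof -
  obtain s Bc Bg where "0 < s" and sv: "\<And>k. \<forall>\<sigma>\<in>singular_values (transpose (Jc (x k))). s \<le> \<sigma>"
    and Bc: "\<And>k. norm (c (x k)) \<le> Bc" and Bg: "\<And>k. norm (gf (x k)) \<le> Bg"
    using SA unfolding standing_assumption_def bounded_iff by (metis image_eqI)
  obtain \<kappa> \<zeta> where "0 < \<zeta>" and H: "\<And>k. onorm (\<lambda>z. H k *v z) \<le> \<kappa>"
    and curv: "\<And>k u. Jc (x k) *v u = 0 \<Longrightarrow> \<zeta> * (norm u)\<^sup>2 \<le> u \<bullet> (H k *v u)"
    using MA unfolding matrix_assumption_def by blast
  obtain tau0 eps sig where "common_iteration gf c Jc tau0 eps sig x d y H tau alpha"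
    using ALG unfolding algorithm1_def algorithm2_def by blast
  then have newton: "\<And>k. H k *v (u k + v k) + transpose (Jc (x k)) *v y k = - gf (x k)"
    and lin: "\<And>k. Jc (x k) *v (u k + v k) = - c (x k)"
    using decomp unfolding common_iteration_def by metis+
  have "0 \<le> \<kappa>" using H[of 0] onorm_pos_le[OF matrix_vector_mul_bounded_linear] by (meson order_trans)
  have "norm (v k) \<le> Bc / s" for k
  proof -
    obtain w where "v k = transpose (Jc (x k)) *v w" using decomp by blast
    then have "s * norm (v k) \<le> norm (Jc (x k) *v v k)"
      by (rule singular_value_bound_range_transpose[OF \<open>0 < s\<close> sv])
    also have "Jc (x k) *v v k = - c (x k)"
      using lin[of k] decomp by (simp add: matrix_vector_right_distrib)
    finally show ?thesis using Bc[of k] \<open>0 < s\<close> by (simp add: pos_le_divide_eq mult.commute)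
  qed
  then have "\<zeta> * norm (u k) \<le> Bg + \<kappa> * (Bc / s)" for k
    using null_space_component_bound[OF _ curv H newton, of k] decomp Bg[of k]
      mult_left_mono[OF _ \<open>0 \<le> \<kappa>\<close>, of "norm (v k)" "Bc / s"]
    by fastforce
  then have "norm (u k) \<le> (Bg + \<kappa> * (Bc / s)) / \<zeta>" for k
    using \<open>0 < \<zeta>\<close> by (simp add: pos_le_divide_eq mult.commute)
  then show ?thesis unfolding bounded_iff by blast
qed

end
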